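(* Let $S$ be a finite set, let $\mathcal{G}\subseteq 2^S$ be connected, and let $\mathcal{C}\subseteq\mathcal{G}$ satisfy $|\mathcal{C}|\neq|\chi(\mathcal{C})|$. Then there exist $X,X'\in\mathcal{C}$ with $(-1)^{|X|}\neq(-1)^{|X'|}$ and a simple path $X=X_0 - X_1 - \cdots - X_{n+1}=X'$ in $G_S$ all of whose nodes lie in $\mathcal{G}$, such that $X_i\notin\mathcal{C}$ for $1\le i\le n$.
   Context: An adjacent pair of $2^S$ is a set $\{X,X\setminus\{x\}\}$ with $X\subseteq S$, $x\in X$. $G_S$ is the undirected graph on vertex set $2^S$ whose edges are the adjacent pairs; $\mathcal{G}\subseteq 2^S$ is connected if it induces a connected subgraph of $G_S$. For a family $\mathcal{D}$ of finite sets, $\chi(\mathcal{D})=\sum_{Y\in\mathcal{D}}(-1)^{|Y|}$. *)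

theory Defs
  imports Main
begin

definition adjacent :: "'a set \<Rightarrow> 'a set \<Rightarrow> 'a set \<Rightarrow> bool" where
  "adjacent S X Y \<longleftrightarrow> X \<subseteq> S \<and> Y \<subseteq> S \<and>
     ((\<exists>x\<in>X. Y = X - {x}) \<or> (\<exists>y\<in>Y. X = Y - {y}))"

definition is_walk :: "'a set \<Rightarrow> 'a set list \<Rightarrow> bool" where
  "is_walk S xs \<longleftrightarrow> xs \<noteq> [] \<and> (\<forall>i. Suc i < length xs \<longrightarrow> adjacent S (xs ! i) (xs ! Suc i))"

definition connected_family :: "'a set \<Rightarrow> 'a set set \<Rightarrow> bool" where
  "connected_family S \<G> \<longleftrightarrow> \<G> \<subseteq> Pow S \<and>
     (\<forall>A\<in>\<G>. \<forall>B\<in>\<G>. \<exists>xs. is_walk S xs \<and> set xs \<subseteq> \<G> \<and> hd xs = A \<and> last xs = B)"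

definition euler_char :: "'a set set \<Rightarrow> int" where
  "euler_char \<D> = (\<Sum>Y\<in>\<D>. (-1) ^ card Y)"

end

theory Submission
  imports Defs
begin

text \<open>Among all walks inside \<open>\<G>\<close> joining two members of \<open>\<C>\<close> of opposite parity, take a
  shortest one. It is a simple path, since a repeated node would let us cut out a cycle, and no
  interior node lies in \<open>\<C>\<close>: such a node differs in parity from one of the two ends, and the
  sub-walk from it to that end would be shorter. Members of opposite parity exist because a
  family whose members all have the same parity has \<open>|\<chi>(\<C>)| = |\<C>|\<close>.\<close>

lemma is_walk_singleton [simp]: "is_walk S [x]"
  by (simp add: is_walk_def)

lemma is_walk_Cons_Cons: "is_walk S (x # y # ys) \<longleftrightarrow> adjacent S x y \<and> is_walk S (y # ys)"
proof
  assume walk: "is_walk S (x # y # ys)"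
  have "adjacent S ((y # ys) ! i) ((y # ys) ! Suc i)" if "Suc i < length (y # ys)" for i
    using walk that unfolding is_walk_def by (metis Suc_less_eq length_Cons nth_Cons_Suc)
  then show "adjacent S x y \<and> is_walk S (y # ys)"
    using walk unfolding is_walk_def by force
next
  assume "adjacent S x y \<and> is_walk S (y # ys)"
  then show "is_walk S (x # y # ys)"
    unfolding is_walk_def by (auto simp: nth_Cons split: nat.split)
qed

lemma is_walk_append_Cons:
  "is_walk S (xs @ [a]) \<Longrightarrow> is_walk S (a # zs) \<Longrightarrow> is_walk S (xs @ a # zs)"
proof (induction xs)
  case (Cons x xs)
  then show ?case by (cases xs) (auto simp: is_walk_Cons_Cons)
qed simp

lemma is_walk_take: "is_walk S xs \<Longrightarrow> 0 < k \<Longrightarrow> is_walk S (take k xs)"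
  by (auto simp: is_walk_def)

lemma is_walk_drop: "is_walk S xs \<Longrightarrow> k < length xs \<Longrightarrow> is_walk S (drop k xs)"
  by (auto simp: is_walk_def)

lemma is_walk_remove_cycle:
  assumes "is_walk S (xs @ [a] @ ys @ [a] @ zs)"
  shows "is_walk S (xs @ [a] @ zs)"
proof -
  have "is_walk S (xs @ [a])"
    using is_walk_take[OF assms, of "Suc (length xs)"] by simp
  moreover have "is_walk S (a # zs)"
    using is_walk_drop[OF assms, of "Suc (length xs + length ys)"] by simp
  ultimately show ?thesis
    using is_walk_append_Cons by fastforce
qed

lemma euler_char_opposite_parity_members:
  assumes "int (card \<C>) \<noteq> \<bar>euler_char \<C>\<bar>"
  shows "\<exists>X\<in>\<C>. \<exists>Y\<in>\<C>. (-1::int) ^ card X \<noteq> (-1) ^ card Y"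
proof (rule ccontr)
  assume same_parity: "\<not> ?thesis"
  have "\<C> \<noteq> {}"
    using assms by (auto simp: euler_char_def)
  then obtain X where X: "X \<in> \<C>" by blast
  have "euler_char \<C> = (\<Sum>Y\<in>\<C>. (-1::int) ^ card X)"
    unfolding euler_char_def using same_parity X by (intro sum.cong) blast+
  also have "\<dots> = int (card \<C>) * (-1) ^ card X"
    by simp
  finally have "\<bar>euler_char \<C>\<bar> = int (card \<C>)"
    by (simp only: abs_mult power_abs abs_neg_one power_one abs_of_nat mult_1_right)
  with assms show False
    by simp
qed

definition label_changing_walk ::
    "'a set \<Rightarrow> 'a set set \<Rightarrow> ('a set \<Rightarrow> 'b) \<Rightarrow> 'a set list \<Rightarrow> bool" where
  "label_changing_walk S \<C> p xs \<longleftrightarrow>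
     is_walk S xs \<and> hd xs \<in> \<C> \<and> last xs \<in> \<C> \<and> p (hd xs) \<noteq> p (last xs)"

lemma label_changing_walk_length:
  assumes "label_changing_walk S \<C> p xs"
  shows "2 \<le> length xs"
proof -
  have "xs \<noteq> []" "hd xs \<noteq> last xs"
    using assms by (auto simp: label_changing_walk_def is_walk_def)
  then show ?thesis
    by (cases xs) (auto simp: Suc_le_eq)
qed

lemma label_changing_walk_shortcut_interior:
  assumes walk: "label_changing_walk S \<C> p xs"
    and i: "0 < i" "i < length xs - 1" and member: "xs ! i \<in> \<C>"
  shows "\<exists>ys. label_changing_walk S \<C> p ys \<and> length ys < length xs \<and> set ys \<subseteq> set xs"
proof (cases "p (xs ! i) = p (hd xs)")
  case True
  have "hd (drop i xs) = xs ! i" "last (drop i xs) = last xs"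
    using i by (auto simp: hd_drop_conv_nth)
  then have "label_changing_walk S \<C> p (drop i xs)"
    using walk i True member by (auto simp: label_changing_walk_def intro: is_walk_drop)
  then show ?thesis
    using i by (intro exI[of _ "drop i xs"]) (auto simp: set_drop_subset)
next
  case False
  have "last (take (Suc i) xs) = xs ! i"
    using i by (simp add: take_Suc_conv_app_nth)
  then have "label_changing_walk S \<C> p (take (Suc i) xs)"
    using walk i False member by (auto simp: label_changing_walk_def intro: is_walk_take)
  then show ?thesis
    using i by (intro exI[of _ "take (Suc i) xs"]) (auto simp: set_take_subset)
qed

lemma label_changing_walk_remove_cycle:
  assumes walk: "label_changing_walk S \<C> p xs" and "\<not> distinct xs"
  shows "\<exists>ys. label_changing_walk S \<C> p ys \<and> length ys < length xs \<and> set ys \<subseteq> set xs"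
proof -
  obtain as a bs cs where xs: "xs = as @ [a] @ bs @ [a] @ cs"
    using \<open>\<not> distinct xs\<close> not_distinct_decomp by blast
  have "hd (as @ [a] @ cs) = hd xs" "last (as @ [a] @ cs) = last xs"
    unfolding xs by (cases as; cases cs; simp)+
  then have "label_changing_walk S \<C> p (as @ [a] @ cs)"
    using walk is_walk_remove_cycle unfolding label_changing_walk_def xs by metis
  then show ?thesis
    unfolding xs by (intro exI[of _ "as @ [a] @ cs"]) auto
qed

lemma shortest_label_changing_walk:
  assumes "label_changing_walk S \<C> p xs"
  shows "\<exists>ys. label_changing_walk S \<C> p ys \<and> distinct ys \<and> set ys \<subseteq> set xs \<and>
           (\<forall>i. 1 \<le> i \<and> i < length ys - 1 \<longrightarrow> ys ! i \<notin> \<C>)"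
  using assms
proof (induction "length xs" arbitrary: xs rule: less_induct)
  case less
  show ?case
  proof (cases "distinct xs \<and> (\<forall>i. 1 \<le> i \<and> i < length xs - 1 \<longrightarrow> xs ! i \<notin> \<C>)")
    case True
    then show ?thesis using less.prems by blast
  next
    case False
    then consider "\<not> distinct xs" | i where "0 < i" "i < length xs - 1" "xs ! i \<in> \<C>"
      by fastforce
    then obtain ys where "label_changing_walk S \<C> p ys" "length ys < length xs" "set ys \<subseteq> set xs"
      using label_changing_walk_remove_cycle label_changing_walk_shortcut_interior less.prems
      by cases blast+
    then show ?thesis
      using less.hyps by (meson order_trans)
  qed
qed

theorem lemma6p9:
  fixes S :: "'a set" and \<G> \<C> :: "'a set set"
  assumes "finite S"
    and "\<G> \<subseteq> Pow S"
    and "connected_family S \<G>"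
    and "\<C> \<subseteq> \<G>"
    and "int (card \<C>) \<noteq> \<bar>euler_char \<C>\<bar>"
  shows "\<exists>X\<in>\<C>. \<exists>X'\<in>\<C>. ((-1::int) ^ card X \<noteq> (-1) ^ card X') \<and>
           (\<exists>xs. is_walk S xs \<and> distinct xs \<and> length xs \<ge> 2 \<and>
                 hd xs = X \<and> last xs = X' \<and> set xs \<subseteq> \<G> \<and>
                 (\<forall>i. 1 \<le> i \<and> i < length xs - 1 \<longrightarrow> xs ! i \<notin> \<C>))"
proof -
  define parity where "parity X = (-1::int) ^ card X" for X :: "'a set"
  obtain X0 X1 where X: "X0 \<in> \<C>" "X1 \<in> \<C>" "parity X0 \<noteq> parity X1"
    using euler_char_opposite_parity_members[OF assms(5)] unfolding parity_def by blast
  have "X0 \<in> \<G>" "X1 \<in> \<G>"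
    using X assms(4) by auto
  then obtain ws where "is_walk S ws" "set ws \<subseteq> \<G>" "hd ws = X0" "last ws = X1"
    using assms(3) unfolding connected_family_def by (elim conjE ballE exE) auto
  with X have "label_changing_walk S \<C> parity ws"
    by (simp add: label_changing_walk_def)
  then obtain xs where xs: "label_changing_walk S \<C> parity xs" "distinct xs" "set xs \<subseteq> set ws"
      "\<forall>i. 1 \<le> i \<and> i < length xs - 1 \<longrightarrow> xs ! i \<notin> \<C>"
    using shortest_label_changing_walk by blast
  moreover have "set xs \<subseteq> \<G>"
    using xs(3) \<open>set ws \<subseteq> \<G>\<close> by blast
  moreover have "2 \<le> length xs"
    using xs(1) by (rule label_changing_walk_length)
  ultimately show ?thesis
    unfolding label_changing_walk_def parity_def by blast
qed

end
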